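(* Let $p=(a,b,c)\in P$ and let $H_p=\{(x,-\tfrac{x}{a},z): x,z\in\mathbb{R},\ z>\tfrac{x}{a}\}$. Every bounded invariant set of the flow of $F_p$ which is not a fixed point (nor limits to one) intersects $H_p$ transversely at least once. In particular, every periodic trajectory of $F_p$ intersects $H_p$ transversely at least once.
   Context: For $p=(a,b,c)\in\mathbb{R}^3$, $F_p$ is the Rössler vector field $\dot x=-y-z,\ \dot y=x+ay,\ \dot z=bx+z(x-c)$ on $\mathbb{R}^3$. $P\subseteq\mathbb{R}^3$ is an open set of parameters such that for every $p=(a,b,c)\in P$: (1) $a,b\in(0,1)$, $c>1$; (2) $F_p$ has exactly two fixed points, $P_{In}=(0,0,0)$ and $P_{Out}=(c-ab,b-\frac{c}{a},\frac{c}{a}-b)$, both saddle-foci; (3) $P_{In}$ has a one-dimensional stable and two-dimensional unstable manifold, $P_{Out}$ a one-dimensional unstable and two-dimensional stable manifold; (4) at least one of the two saddle indices $\nu_{In},\nu_{Out}$ (ratio of absolute real part of the complex eigenvalues to absolute value of the real eigenvalue) is $<1$. The plane $\{(x,-x/a,z)\}$ is the set $\{\dot y=0\}$; $F_p$ is tangent to it exactly along the line $\{(t,-t/a,t/a)\}$, and $H_p$ is the upper component of its complement in the plane. *)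

theory Defs
  imports "HOL-Analysis.Analysis"
begin

type_synonym point3 = "real \<times> real \<times> real"
type_synonym param3 = "real \<times> real \<times> real"

fun rossler :: "param3 \<Rightarrow> point3 \<Rightarrow> point3" where
  "rossler (a, b, c) (x, y, z) = (- y - z, x + a * y, b * x + z * (x - c))"

fun rossler_jac :: "param3 \<Rightarrow> point3 \<Rightarrow> complex^3^3" where
  "rossler_jac (a, b, c) (x, y, z) =
     vector [vector [0, -1, -1],
             vector [1, complex_of_real a, 0],
             vector [complex_of_real (b + z), 0, complex_of_real (x - c)]]"

definition eigenvalues3 :: "complex^3^3 \<Rightarrow> complex set" where
  "eigenvalues3 J = {l. det (mat l - J) = 0}"

definition saddle_focus_spectrum :: "complex^3^3 \<Rightarrow> real \<Rightarrow> real \<Rightarrow> real \<Rightarrow> bool" where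
  "saddle_focus_spectrum J \<gamma> \<rho> \<omega> \<longleftrightarrow>
     \<omega> \<noteq> 0 \<and> eigenvalues3 J = {complex_of_real \<gamma>, Complex \<rho> \<omega>, Complex \<rho> (- \<omega>)}"

definition P_In :: point3 where "P_In = (0, 0, 0)"

fun P_Out :: "param3 \<Rightarrow> point3" where
  "P_Out (a, b, c) = (c - a * b, b - c / a, c / a - b)"

fun rossler_param_ok :: "param3 \<Rightarrow> bool" where
  "rossler_param_ok (a, b, c) \<longleftrightarrow>
     0 < a \<and> a < 1 \<and> 0 < b \<and> b < 1 \<and> 1 < c \<and>
     P_In \<noteq> P_Out (a, b, c) \<and>
     {q. rossler (a, b, c) q = 0} = {P_In, P_Out (a, b, c)} \<and>
     (\<exists>\<gamma>i \<rho>i \<omega>i \<gamma>o \<rho>o \<omega>o.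
        saddle_focus_spectrum (rossler_jac (a, b, c) P_In) \<gamma>i \<rho>i \<omega>i \<and> \<gamma>i < 0 \<and> \<rho>i > 0 \<and>
        saddle_focus_spectrum (rossler_jac (a, b, c) (P_Out (a, b, c))) \<gamma>o \<rho>o \<omega>o \<and> \<gamma>o > 0 \<and> \<rho>o < 0 \<and>
        (\<bar>\<rho>i\<bar> / \<bar>\<gamma>i\<bar> < 1 \<or> \<bar>\<rho>o\<bar> / \<bar>\<gamma>o\<bar> < 1))"

text \<open>The upper half-plane H_p of the plane {ydot = 0}.\<close>
fun H_p :: "param3 \<Rightarrow> point3 set" where
  "H_p (a, b, c) = {(x, - x / a, z) | x z. z > x / a}"

text \<open>F_p(q) is transverse to the plane {x + a y = 0} (normal vector (1,a,0)).\<close>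
fun transverse_to_plane :: "param3 \<Rightarrow> point3 \<Rightarrow> bool" where
  "transverse_to_plane (a, b, c) q \<longleftrightarrow> fst (rossler (a, b, c) q) + a * fst (snd (rossler (a, b, c) q)) \<noteq> 0"

end

(*
  Write g = y' = x + a y. On the plane {g = 0} its derivative is g' = -y - z = x/a - z, which
  is negative exactly on H_p, and there the field is transverse to the plane. So if the orbit
  never meets H_p, every zero of g has g' >= 0, and a zero with g' = g'' = 0 is an equilibrium,
  which by a Gronwall estimate the orbit never leaves. Hence g cannot change sign from positive
  to negative, so y is eventually monotone and, being bounded, converges. Barbalat's lemma along
  the bounded orbit then gives y', y'', z' -> 0, so the orbit converges to an equilibrium.
*)

theory Submission
  imports Defs
begin

lemma gronwall_inequality:
  fixes e e' :: "real \<Rightarrow> real"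
  assumes deriv: "\<And>t. (e has_real_derivative e' t) (at t)"
    and growth: "\<And>t. e' t \<le> C * e t"
    and "u \<le> t"
  shows "e t \<le> e u * exp (C * (t - u))"
proof -
  define h where "h s = e s * exp (- C * s)" for s
  have "(h has_real_derivative (e' s - C * e s) * exp (- C * s)) (at s)" for s
    unfolding h_def by (auto intro!: derivative_eq_intros deriv simp: algebra_simps)
  then have "h t \<le> h u"
    using growth \<open>u \<le> t\<close>
    by (intro DERIV_nonpos_imp_nonincreasing[of u t h]) (auto intro!: exI mult_nonpos_nonneg)
  then have "h t * exp (C * t) \<le> h u * exp (C * t)"
    by simp
  then show ?thesis
    by (simp add: h_def mult.assoc exp_add[symmetric] algebra_simps)
qed

lemma trajectory_stays_at_point:
  fixes \<phi> :: "real \<Rightarrow> 'a::real_inner"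
  assumes ode: "\<And>t. (\<phi> has_vector_derivative F (\<phi> t)) (at t)"
    and one_sided_lipschitz: "\<And>t. inner (\<phi> t - q) (F (\<phi> t)) \<le> C * (norm (\<phi> t - q))\<^sup>2"
    and "\<phi> u = q" "u \<le> t"
  shows "\<phi> t = q"
proof -
  define e where "e s = inner (\<phi> s - q) (\<phi> s - q)" for s
  have "(e has_real_derivative 2 * inner (\<phi> s - q) (F (\<phi> s))) (at s)" for s
    using ode[of s] unfolding e_def has_field_derivative_def has_vector_derivative_def
    by (auto intro!: derivative_eq_intros simp: inner_commute algebra_simps)
  moreover have "2 * inner (\<phi> s - q) (F (\<phi> s)) \<le> 2 * C * e s" for s
    using one_sided_lipschitz[of s] by (simp add: e_def power2_norm_eq_inner)
  ultimately have "e t \<le> e u * exp (2 * C * (t - u))"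
    using \<open>u \<le> t\<close> by (rule gronwall_inequality)
  then have "inner (\<phi> t - q) (\<phi> t - q) \<le> 0"
    using \<open>\<phi> u = q\<close> by (simp add: e_def)
  then show ?thesis
    by (meson antisym inner_ge_zero inner_eq_zero_iff right_minus_eq)
qed

lemma abs_deriv_le_difference_quotient:
  fixes f f' f'' :: "real \<Rightarrow> real"
  assumes f: "\<And>t. (f has_real_derivative f' t) (at t)"
    and f': "\<And>t. (f' has_real_derivative f'' t) (at t)"
    and bounded: "\<And>t. \<bar>f'' t\<bar> \<le> M"
    and "h > 0"
  shows "\<bar>f' t\<bar> \<le> \<bar>f (t + h) - f t\<bar> / h + h * M"
proof -
  obtain \<xi> where \<xi>: "t < \<xi>" "\<xi> < t + h" "f (t + h) - f t = h * f' \<xi>"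
    using MVT2[of t "t + h" f f'] \<open>h > 0\<close> f by auto
  obtain \<zeta> where "f' \<xi> - f' t = (\<xi> - t) * f'' \<zeta>"
    using MVT2[of t \<xi> f' f''] \<xi> f' by auto
  then have "\<bar>f' \<xi> - f' t\<bar> \<le> (\<xi> - t) * M"
    using \<xi> bounded[of \<zeta>] by (simp add: abs_mult mult_left_mono)
  also have "\<dots> \<le> h * M"
    using \<xi> bounded[of 0] by (intro mult_right_mono) auto
  finally have "\<bar>f' \<xi> - f' t\<bar> \<le> h * M" .
  moreover have "\<bar>f' \<xi>\<bar> = \<bar>f (t + h) - f t\<bar> / h"
    using \<xi>(3) \<open>h > 0\<close> by (simp add: abs_mult)
  ultimately show ?thesis
    by linarith
qed

lemma barbalat:
  fixes f f' f'' :: "real \<Rightarrow> real"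
  assumes f: "\<And>t. (f has_real_derivative f' t) (at t)"
    and f': "\<And>t. (f' has_real_derivative f'' t) (at t)"
    and bounded: "\<And>t. \<bar>f'' t\<bar> \<le> M"
    and "(f \<longlongrightarrow> L) at_top"
  shows "(f' \<longlongrightarrow> 0) at_top"
proof (rule tendstoI)
  fix \<epsilon> :: real
  assume "\<epsilon> > 0"
  have "M \<ge> 0"
    using bounded[of 0] by linarith
  define h where "h = \<epsilon> / (2 * (M + 1))"
  have "h > 0"
    using \<open>\<epsilon> > 0\<close> \<open>M \<ge> 0\<close> by (simp add: h_def)
  have "h * M < h * (M + 1)"
    using \<open>h > 0\<close> by simp
  also have "\<dots> = \<epsilon> / 2"
    using \<open>M \<ge> 0\<close> by (simp add: h_def field_simps)
  finally have "h * M < \<epsilon> / 2" .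
  have "\<forall>\<^sub>F t in at_top. dist (f t) L < \<epsilon> * h / 4"
    using \<open>(f \<longlongrightarrow> L) at_top\<close> \<open>\<epsilon> > 0\<close> \<open>h > 0\<close> by (intro tendstoD) auto
  then obtain N where N: "\<And>t. t \<ge> N \<Longrightarrow> dist (f t) L < \<epsilon> * h / 4"
    by (auto simp: eventually_at_top_linorder)
  have "\<bar>f' t\<bar> < \<epsilon>" if "t \<ge> N" for t
  proof -
    have "\<bar>f (t + h) - f t\<bar> < \<epsilon> * h / 2"
      using N[of t] N[of "t + h"] dist_triangle2[of "f (t + h)" "f t" L] \<open>t \<ge> N\<close> \<open>h > 0\<close>
      by (simp add: dist_real_def)
    then have "\<bar>f (t + h) - f t\<bar> / h < \<epsilon> / 2"
      using \<open>h > 0\<close> by (simp add: divide_less_eq)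
    then show ?thesis
      using abs_deriv_le_difference_quotient[OF f f' bounded \<open>h > 0\<close>, of t] \<open>h * M < \<epsilon> / 2\<close>
      by linarith
  qed
  then show "\<forall>\<^sub>F t in at_top. dist (f' t) 0 < \<epsilon>"
    unfolding eventually_at_top_linorder by auto
qed

lemma tendsto_Sup_at_top_if_mono_on:
  fixes f :: "real \<Rightarrow> 'a::{linorder_topology, conditionally_complete_linorder}"
  assumes mono: "mono_on {T..} f" and bdd: "bdd_above (f ` {T..})"
  shows "(f \<longlongrightarrow> Sup (f ` {T..})) at_top"
proof (rule order_tendstoI)
  fix y
  assume "y < Sup (f ` {T..})"
  then obtain s where "s \<ge> T" "y < f s"
    using less_cSup_iff[OF _ bdd] by auto
  then have "y < f t" if "t \<ge> s" for t
    using mono_onD[OF mono, of s t] that by (auto intro: order.strict_trans2)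
  then show "\<forall>\<^sub>F t in at_top. y < f t"
    unfolding eventually_at_top_linorder by blast
next
  fix y
  assume "y > Sup (f ` {T..})"
  then have "f t < y" if "t \<ge> T" for t
    using cSup_upper[OF _ bdd, of "f t"] that by (auto intro: order.strict_trans1)
  then show "\<forall>\<^sub>F t in at_top. f t < y"
    unfolding eventually_at_top_linorder by blast
qed

lemma convergent_at_top_if_deriv_nonneg:
  fixes f f' :: "real \<Rightarrow> real"
  assumes deriv: "\<And>t. (f has_real_derivative f' t) (at t)"
    and nonneg: "\<And>t. t \<ge> T \<Longrightarrow> f' t \<ge> 0"
    and bounded: "\<And>t. f t \<le> B"
  shows "\<exists>L. (f \<longlongrightarrow> L) at_top"
proof -
  have "mono_on {T..} f"
  proof (rule mono_onI)
    fix s t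
    assume "s \<in> {T..}" "s \<le> t"
    show "f s \<le> f t"
    proof (rule DERIV_nonneg_imp_nondecreasing[OF \<open>s \<le> t\<close>])
      fix x
      assume "s \<le> x"
      with \<open>s \<in> {T..}\<close> show "\<exists>y. (f has_real_derivative y) (at x) \<and> y \<ge> 0"
        by (intro exI[of _ "f' x"] conjI deriv nonneg) simp
    qed
  qed
  moreover have "bdd_above (f ` {T..})"
    using bounded by (intro bdd_aboveI2)
  ultimately show ?thesis
    using tendsto_Sup_at_top_if_mono_on by blast
qed

lemma bounded_along_bounded_range:
  fixes \<phi> :: "'a \<Rightarrow> 'b::heine_borel" and H :: "'b \<Rightarrow> real"
  assumes "bounded (range \<phi>)" and "continuous_on UNIV H"
  obtains M where "\<And>t. \<bar>H (\<phi> t)\<bar> \<le> M"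
proof -
  have "compact (H ` closure (range \<phi>))"
    using compact_continuous_image[OF continuous_on_subset[OF assms(2) subset_UNIV]]
      compact_closure[THEN iffD2, OF assms(1)] by blast
  then have "bounded (H ` closure (range \<phi>))"
    by (rule compact_imp_bounded)
  then obtain M where M: "\<forall>y \<in> H ` closure (range \<phi>). \<bar>y\<bar> \<le> M"
    unfolding bounded_real by blast
  show thesis
  proof (rule that)
    fix t
    have "\<phi> t \<in> closure (range \<phi>)"
      by (rule closure_subset[THEN subsetD, OF rangeI])
    then show "\<bar>H (\<phi> t)\<bar> \<le> M"
      by (rule M[rule_format, OF imageI])
  qed
qed

lemma last_exit_from_positivity:
  fixes g :: "real \<Rightarrow> real"
  assumes cont: "continuous_on UNIV g" and "t1 < t2" "g t1 > 0" "g t2 < 0"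
  obtains u where "u < t2" "g u = 0"
    and "\<And>t. u < t \<Longrightarrow> t \<le> t2 \<Longrightarrow> g t \<le> 0"
    and "\<And>d. d > 0 \<Longrightarrow> \<exists>s. u - d < s \<and> s < u \<and> g s > 0"
proof -
  define S where "S = {t \<in> {t1..t2}. g t > 0}"
  define u where "u = Sup S"
  have "t1 \<in> S" "bdd_above S"
    using assms by (auto simp: S_def)
  have "closed ({t1..t2} \<inter> {t. 0 \<le> g t})"
    using cont by (intro closed_Int closed_Collect_le) (auto intro: continuous_intros)
  moreover have "u \<in> closure S"
    unfolding u_def using \<open>t1 \<in> S\<close> \<open>bdd_above S\<close> by (intro closure_contains_Sup) auto
  moreover have "S \<subseteq> {t1..t2} \<inter> {t. 0 \<le> g t}"
    by (auto simp: S_def)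
  ultimately have u: "u \<in> {t1..t2}" "g u \<ge> 0"
    using closure_minimal by blast+
  then have "u < t2"
    using \<open>g t2 < 0\<close> by (cases "u = t2") auto
  have right: "g t \<le> 0" if "u < t" "t \<le> t2" for t
    using that u cSup_upper[OF _ \<open>bdd_above S\<close>, of t] by (force simp: S_def u_def)
  have "g u \<le> 0"
  proof (rule tendsto_upperbound)
    show "(g \<longlongrightarrow> g u) (at_right u)"
      using cont by (metis continuous_on_def UNIV_I tendsto_within_subset subset_UNIV)
    show "\<forall>\<^sub>F t in at_right u. g t \<le> 0"
      using \<open>u < t2\<close> right by (auto simp: eventually_at_right_field)
  qed simp
  have "\<exists>s. u - d < s \<and> s < u \<and> g s > 0" if "d > 0" for d
  proof -
    obtain s where "s \<in> S" "u - d < s"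
      using less_cSup_iff[OF _ \<open>bdd_above S\<close>, of "u - d"] \<open>t1 \<in> S\<close> \<open>d > 0\<close>
      by (auto simp: u_def)
    moreover have "s \<le> u"
      using \<open>s \<in> S\<close> \<open>bdd_above S\<close> by (simp add: u_def cSup_upper)
    moreover have "s \<noteq> u"
      using \<open>s \<in> S\<close> \<open>g u \<ge> 0\<close> \<open>g u \<le> 0\<close> by (auto simp: S_def)
    ultimately show ?thesis
      by (auto simp: S_def)
  qed
  with u \<open>u < t2\<close> \<open>g u \<ge> 0\<close> \<open>g u \<le> 0\<close> right show thesis
    by (intro that) auto
qed

lemma above_right_of_double_zero:
  fixes g g' g'' :: "real \<Rightarrow> real"
  assumes g: "\<And>t. (g has_real_derivative g' t) (at t)"
    and g': "\<And>t. (g' has_real_derivative g'' t) (at t)"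
    and "g' u = 0" "g'' u > 0"
  obtains d where "d > 0" "\<And>t. u < t \<Longrightarrow> t < u + d \<Longrightarrow> g t > g u"
proof -
  obtain d where "d > 0" and inc: "\<And>h. h > 0 \<Longrightarrow> h < d \<Longrightarrow> g' u < g' (u + h)"
    using DERIV_pos_inc_right[OF g' \<open>g'' u > 0\<close>] by blast
  have "g t > g u" if "u < t" "t < u + d" for t
  proof -
    obtain \<xi> where "u < \<xi>" "\<xi> < t" "g t - g u = (t - u) * g' \<xi>"
      using MVT2[OF \<open>u < t\<close> g] by blast
    moreover have "g' \<xi> > 0"
      using inc[of "\<xi> - u"] \<open>g' u = 0\<close> \<open>u < \<xi>\<close> \<open>\<xi> < t\<close> \<open>t < u + d\<close> by simp
    ultimately show ?thesis
      using \<open>u < t\<close> by (metis diff_gt_0_iff_gt zero_less_mult_iff)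
  qed
  with \<open>d > 0\<close> show thesis
    using that by blast
qed

lemma below_left_of_double_zero:
  fixes g g' g'' :: "real \<Rightarrow> real"
  assumes g: "\<And>t. (g has_real_derivative g' t) (at t)"
    and g': "\<And>t. (g' has_real_derivative g'' t) (at t)"
    and "g' u = 0" "g'' u < 0"
  obtains d where "d > 0" "\<And>s. u - d < s \<Longrightarrow> s < u \<Longrightarrow> g s < g u"
proof -
  obtain d where "d > 0" and inc: "\<And>h. h > 0 \<Longrightarrow> h < d \<Longrightarrow> g' u < g' (u - h)"
    using DERIV_neg_dec_left[OF g' \<open>g'' u < 0\<close>] by blast
  have "g s < g u" if "u - d < s" "s < u" for s
  proof -
    obtain \<xi> where "s < \<xi>" "\<xi> < u" "g u - g s = (u - s) * g' \<xi>"
      using MVT2[OF \<open>s < u\<close> g] by blast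
    moreover have "g' \<xi> > 0"
      using inc[of "u - \<xi>"] \<open>g' u = 0\<close> \<open>\<xi> < u\<close> \<open>s < \<xi>\<close> \<open>u - d < s\<close> by simp
    ultimately show ?thesis
      using \<open>s < u\<close> by (metis diff_gt_0_iff_gt zero_less_mult_iff)
  qed
  with \<open>d > 0\<close> show thesis
    using that by blast
qed

lemma nonneg_after_pos_if_no_down_crossing:
  fixes g g' g'' :: "real \<Rightarrow> real"
  assumes g: "\<And>t. (g has_real_derivative g' t) (at t)"
    and g': "\<And>t. (g' has_real_derivative g'' t) (at t)"
    and slope_at_zero: "\<And>t. g t = 0 \<Longrightarrow> g' t \<ge> 0"
    and nondegenerate: "\<And>t. g t = 0 \<Longrightarrow> g' t = 0 \<Longrightarrow> g'' t \<noteq> 0"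
    and "g t1 > 0" "t1 \<le> t2"
  shows "g t2 \<ge> 0"
proof (rule ccontr)
  assume "\<not> g t2 \<ge> 0"
  then have "g t2 < 0" "t1 < t2"
    using \<open>g t1 > 0\<close> \<open>t1 \<le> t2\<close> by (auto simp: order_le_less)
  moreover have "continuous_on UNIV g"
    using g by (meson DERIV_isCont continuous_at_imp_continuous_on)
  ultimately obtain u where "u < t2" "g u = 0"
    and right: "\<And>t. u < t \<Longrightarrow> t \<le> t2 \<Longrightarrow> g t \<le> 0"
    and left: "\<And>d. d > 0 \<Longrightarrow> \<exists>s. u - d < s \<and> s < u \<and> g s > 0"
    using last_exit_from_positivity \<open>g t1 > 0\<close> by metis
  have "g' u = 0"
  proof (rule ccontr)
    assume "g' u \<noteq> 0"
    then have "g' u > 0"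
      using slope_at_zero[OF \<open>g u = 0\<close>] by simp
    then obtain d where "d > 0" and dec: "\<And>h. h > 0 \<Longrightarrow> h < d \<Longrightarrow> g (u - h) < g u"
      using DERIV_pos_inc_left[OF g] by blast
    then obtain s where "u - d < s" "s < u" "g s > 0"
      using left by blast
    then show False
      using dec[of "u - s"] \<open>g u = 0\<close> by simp
  qed
  then have "g'' u \<noteq> 0"
    using nondegenerate \<open>g u = 0\<close> by blast
  then consider "g'' u > 0" | "g'' u < 0"
    by linarith
  then show False
  proof cases
    case 1
    obtain d where "d > 0" and up: "\<And>t. u < t \<Longrightarrow> t < u + d \<Longrightarrow> g t > g u"
      using above_right_of_double_zero[OF g g' \<open>g' u = 0\<close> 1] by blast
    define t where "t = min (u + d / 2) t2"
    have "u < t" "t < u + d" "t \<le> t2"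
      using \<open>d > 0\<close> \<open>u < t2\<close> by (auto simp: t_def)
    then show False
      using up[of t] right[of t] \<open>g u = 0\<close> by simp
  next
    case 2
    obtain d where "d > 0" and down: "\<And>s. u - d < s \<Longrightarrow> s < u \<Longrightarrow> g s < g u"
      using below_left_of_double_zero[OF g g' \<open>g' u = 0\<close> 2] by blast
    then obtain s where "u - d < s" "s < u" "g s > 0"
      using left by blast
    then show False
      using down[of s] \<open>g u = 0\<close> by simp
  qed
qed

lemma rossler_one_sided_lipschitz:
  assumes "rossler (a, b, c) q = 0" and "\<bar>snd (snd p)\<bar> \<le> B"
  shows "inner (p - q) (rossler (a, b, c) p)
           \<le> (\<bar>b - 1\<bar> + B + \<bar>a\<bar> + \<bar>fst q - c\<bar>) * (norm (p - q))\<^sup>2"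
proof -
  obtain x y z x0 y0 z0 where pq: "p = (x, y, z)" "q = (x0, y0, z0)"
    by (cases p, cases q) auto
  define u v w where "u = x - x0" and "v = y - y0" and "w = z - z0"
  define S where "S = u\<^sup>2 + v\<^sup>2 + w\<^sup>2"
  have "\<bar>z\<bar> \<le> B"
    using assms(2) by (simp add: pq)
  have uw: "\<bar>u * w\<bar> \<le> S"
    using sum_squares_bound[of "\<bar>u\<bar>" "\<bar>w\<bar>"] zero_le_power2[of v]
      mult_nonneg_nonneg[OF abs_ge_zero abs_ge_zero, of u w]
    unfolding S_def abs_mult power2_abs by linarith
  have "inner (p - q) (rossler (a, b, c) p)
          = inner (p - q) (rossler (a, b, c) p - rossler (a, b, c) q)"
    using assms(1) by simp
  also have "\<dots> = (b - 1 + z) * (u * w) + a * v\<^sup>2 + (x0 - c) * w\<^sup>2"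
    by (simp add: pq u_def v_def w_def power2_eq_square algebra_simps)
  also have "\<dots> \<le> (\<bar>b - 1\<bar> + B) * S + \<bar>a\<bar> * S + \<bar>x0 - c\<bar> * S"
  proof (intro add_mono)
    have "(b - 1 + z) * (u * w) \<le> \<bar>b - 1 + z\<bar> * \<bar>u * w\<bar>"
      by (metis abs_ge_self abs_mult)
    also have "\<dots> \<le> (\<bar>b - 1\<bar> + B) * S"
      using uw \<open>\<bar>z\<bar> \<le> B\<close> by (intro mult_mono) auto
    finally show "(b - 1 + z) * (u * w) \<le> (\<bar>b - 1\<bar> + B) * S" .
    show "a * v\<^sup>2 \<le> \<bar>a\<bar> * S" "(x0 - c) * w\<^sup>2 \<le> \<bar>x0 - c\<bar> * S"
      by (intro mult_mono; simp add: S_def)+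
  qed
  also have "S = inner (p - q) (p - q)"
    by (simp add: S_def pq u_def v_def w_def power2_eq_square)
  finally show ?thesis
    by (simp add: pq power2_norm_eq_inner algebra_simps)
qed

locale rossler_orbit =
  fixes a b c :: real and \<phi> :: "real \<Rightarrow> point3"
  assumes a_pos: "0 < a"
    and ode: "\<And>t. (\<phi> has_vector_derivative rossler (a, b, c) (\<phi> t)) (at t)"
    and bounded_orbit: "bounded (range \<phi>)"
begin

definition X :: "real \<Rightarrow> real" where "X t = fst (\<phi> t)"
definition Y :: "real \<Rightarrow> real" where "Y t = fst (snd (\<phi> t))"
definition Z :: "real \<Rightarrow> real" where "Z t = snd (snd (\<phi> t))"

definition Y' :: "real \<Rightarrow> real" where "Y' t = X t + a * Y t"
definition Z' :: "real \<Rightarrow> real" where "Z' t = b * X t + Z t * (X t - c)"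
definition Y'' :: "real \<Rightarrow> real" where "Y'' t = - Y t - Z t + a * Y' t"
definition Y''' :: "real \<Rightarrow> real" where "Y''' t = - Y' t - Z' t + a * Y'' t"
definition Z'' :: "real \<Rightarrow> real" where
  "Z'' t = b * (- Y t - Z t) + Z' t * (X t - c) + Z t * (- Y t - Z t)"

lemma \<phi>_eq: "\<phi> t = (X t, Y t, Z t)"
  by (simp add: X_def Y_def Z_def)

lemma rossler_along_orbit: "rossler (a, b, c) (\<phi> t) = (- Y t - Z t, Y' t, Z' t)"
  by (simp add: \<phi>_eq Y'_def Z'_def)

lemma
  shows X_deriv: "(X has_real_derivative - Y t - Z t) (at t)"
    and Y_deriv: "(Y has_real_derivative Y' t) (at t)"
    and Z_deriv: "(Z has_real_derivative Z' t) (at t)"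
proof -
  have "(\<phi> has_derivative (\<lambda>h. h *\<^sub>R rossler (a, b, c) (\<phi> t))) (at t)"
    using ode[of t] by (simp add: has_vector_derivative_def)
  then show "(X has_real_derivative - Y t - Z t) (at t)"
    and "(Y has_real_derivative Y' t) (at t)"
    and "(Z has_real_derivative Z' t) (at t)"
    unfolding X_def[abs_def] Y_def[abs_def] Z_def[abs_def] has_field_derivative_def
    by (auto intro!: derivative_eq_intros simp: rossler_along_orbit X_def Y_def Z_def)
qed

lemma Y'_deriv: "(Y' has_real_derivative Y'' t) (at t)"
  unfolding Y'_def[abs_def]
  by (auto intro!: derivative_eq_intros X_deriv Y_deriv simp: Y''_def)

lemma Y''_deriv: "(Y'' has_real_derivative Y''' t) (at t)"
  unfolding Y''_def[abs_def]
  by (auto intro!: derivative_eq_intros Y_deriv Z_deriv Y'_deriv simp: Y'''_def)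

lemma Z'_deriv: "(Z' has_real_derivative Z'' t) (at t)"
  unfolding Z'_def[abs_def]
  by (auto intro!: derivative_eq_intros X_deriv Z_deriv simp: Z''_def Z'_def algebra_simps)

lemma bounded_along_orbit:
  fixes f :: "real \<Rightarrow> real \<Rightarrow> real \<Rightarrow> real"
  assumes "continuous_on UNIV (\<lambda>p. f (fst p) (fst (snd p)) (snd (snd p)))"
  shows "\<exists>M. \<forall>t. \<bar>f (X t) (Y t) (Z t)\<bar> \<le> M"
  using bounded_along_bounded_range[OF bounded_orbit assms] by (metis X_def Y_def Z_def)

lemma Y''_bounded: "\<exists>M. \<forall>t. \<bar>Y'' t\<bar> \<le> M"
  unfolding Y''_def Y'_def
  by (rule bounded_along_orbit[of
        "\<lambda>x y z. - y - z + a * (x + a * y)"])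
    (intro continuous_intros)

lemma Y'''_bounded: "\<exists>M. \<forall>t. \<bar>Y''' t\<bar> \<le> M"
  unfolding Y'''_def Y''_def Y'_def Z'_def
  by (rule bounded_along_orbit[of
        "\<lambda>x y z. - (x + a * y) - (b * x + z * (x - c)) + a * (- y - z + a * (x + a * y))"])
    (intro continuous_intros)

lemma Z''_bounded: "\<exists>M. \<forall>t. \<bar>Z'' t\<bar> \<le> M"
  unfolding Z''_def Z'_def
  by (rule bounded_along_orbit[of
        "\<lambda>x y z. b * (- y - z) + (b * x + z * (x - c)) * (x - c) + z * (- y - z)"])
    (intro continuous_intros)

lemma crossing_if_Y'_zero_Y''_neg:
  assumes "Y' t = 0" and "Y'' t < 0"
  shows "\<phi> t \<in> H_p (a, b, c) \<and> transverse_to_plane (a, b, c) (\<phi> t)"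
proof
  have "Y t = - X t / a"
    using \<open>Y' t = 0\<close> a_pos by (simp add: Y'_def field_simps)
  moreover have "Z t > X t / a"
    using assms a_pos by (simp add: Y''_def Y'_def \<open>Y t = - X t / a\<close>)
  ultimately show "\<phi> t \<in> H_p (a, b, c)"
    by (auto simp: \<phi>_eq)
  show "transverse_to_plane (a, b, c) (\<phi> t)"
    using \<open>Y'' t < 0\<close> by (simp add: rossler_along_orbit Y''_def Y'_def)
qed

lemma equilibrium_if_Y'_Y''_Y'''_zero:
  assumes "Y' t = 0" "Y'' t = 0" "Y''' t = 0"
  shows "rossler (a, b, c) (\<phi> t) = 0"
  using assms by (simp add: rossler_along_orbit Y'_def Y''_def Y'''_def Z'_def zero_prod_def)

lemma tendsto_equilibrium_if_reached:
  assumes "rossler (a, b, c) (\<phi> u) = 0"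
  shows "(\<phi> \<longlongrightarrow> \<phi> u) at_top"
proof -
  have "\<exists>B. \<forall>t. \<bar>Z t\<bar> \<le> B"
    by (rule bounded_along_orbit[of "\<lambda>x y z. z"]) (intro continuous_intros)
  then obtain B where B: "\<And>t. \<bar>Z t\<bar> \<le> B"
    by blast
  define C where "C = \<bar>b - 1\<bar> + B + \<bar>a\<bar> + \<bar>fst (\<phi> u) - c\<bar>"
  have "inner (\<phi> t - \<phi> u) (rossler (a, b, c) (\<phi> t)) \<le> C * (norm (\<phi> t - \<phi> u))\<^sup>2" for t
    unfolding C_def using assms B[of t] by (intro rossler_one_sided_lipschitz) (simp_all add: Z_def)
  then have "\<phi> t = \<phi> u" if "u \<le> t" for t
    using ode that by (intro trajectory_stays_at_point[where F = "rossler (a, b, c)"]) auto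
  then have "\<forall>\<^sub>F t in at_top. \<phi> t = \<phi> u"
    unfolding eventually_at_top_linorder by blast
  then show ?thesis
    by (rule tendsto_eventually)
qed

lemma Y'_nonneg_after_pos:
  assumes no_crossing: "\<And>t. \<not> (\<phi> t \<in> H_p (a, b, c) \<and> transverse_to_plane (a, b, c) (\<phi> t))"
    and no_equilibrium: "\<And>t. rossler (a, b, c) (\<phi> t) \<noteq> 0"
    and "Y' t1 > 0" "t1 \<le> t"
  shows "Y' t \<ge> 0"
proof (rule nonneg_after_pos_if_no_down_crossing[OF Y'_deriv Y''_deriv _ _ assms(3,4)])
  show "Y'' s \<ge> 0" if "Y' s = 0" for s
    using crossing_if_Y'_zero_Y''_neg[OF that] no_crossing by (meson not_le)
  show "Y''' s \<noteq> 0" if "Y' s = 0" "Y'' s = 0" for s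
    using equilibrium_if_Y'_Y''_Y'''_zero[OF that] no_equilibrium by blast
qed

lemma Y_convergent_if_no_crossing:
  assumes no_crossing: "\<And>t. \<not> (\<phi> t \<in> H_p (a, b, c) \<and> transverse_to_plane (a, b, c) (\<phi> t))"
    and no_equilibrium: "\<And>t. rossler (a, b, c) (\<phi> t) \<noteq> 0"
  shows "\<exists>L. (Y \<longlongrightarrow> L) at_top"
proof -
  have "\<exists>B. \<forall>t. \<bar>Y t\<bar> \<le> B"
    by (rule bounded_along_orbit[of "\<lambda>x y z. y"]) (intro continuous_intros)
  then obtain B where B: "\<And>t. \<bar>Y t\<bar> \<le> B"
    by blast
  show ?thesis
  proof (cases "\<exists>t1. Y' t1 > 0")
    case True
    then obtain t1 where "Y' t1 > 0"
      by blast
    show ?thesis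
    proof (rule convergent_at_top_if_deriv_nonneg[OF Y_deriv])
      show "Y' t \<ge> 0" if "t \<ge> t1" for t
        using Y'_nonneg_after_pos[OF no_crossing no_equilibrium \<open>Y' t1 > 0\<close> that] .
      show "Y t \<le> B" for t
        using B[of t] by (simp add: abs_le_iff)
    qed
  next
    case False
    have "((\<lambda>t. - Y t) has_real_derivative - Y' t) (at t)" for t
      by (intro derivative_intros Y_deriv)
    moreover have "- Y' t \<ge> 0" for t
      using False by (simp add: not_less)
    moreover have "- Y t \<le> B" for t
      using B[of t] by (simp add: abs_le_iff)
    ultimately obtain L where "((\<lambda>t. - Y t) \<longlongrightarrow> L) at_top"
      using convergent_at_top_if_deriv_nonneg[of "\<lambda>t. - Y t" "\<lambda>t. - Y' t" 0 B] by blast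
    then have "((\<lambda>t. - (- Y t)) \<longlongrightarrow> - L) at_top"
      by (intro tendsto_minus)
    then show ?thesis
      by auto
  qed
qed

lemma tendsto_equilibrium_if_Y_converges:
  assumes "(Y \<longlongrightarrow> L) at_top"
  shows "\<exists>q. rossler (a, b, c) q = 0 \<and> (\<phi> \<longlongrightarrow> q) at_top"
proof -
  obtain M1 M2 M3 where "\<And>t. \<bar>Y'' t\<bar> \<le> M1" "\<And>t. \<bar>Y''' t\<bar> \<le> M2" "\<And>t. \<bar>Z'' t\<bar> \<le> M3"
    using Y''_bounded Y'''_bounded Z''_bounded by metis
  have Y': "(Y' \<longlongrightarrow> 0) at_top"
    by (rule barbalat[OF Y_deriv Y'_deriv \<open>\<And>t. \<bar>Y'' t\<bar> \<le> M1\<close> assms])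
  have Y'': "(Y'' \<longlongrightarrow> 0) at_top"
    by (rule barbalat[OF Y'_deriv Y''_deriv \<open>\<And>t. \<bar>Y''' t\<bar> \<le> M2\<close> Y'])
  have "((\<lambda>t. - Y t - Y'' t + a * Y' t) \<longlongrightarrow> - L - 0 + a * 0) at_top"
    by (intro tendsto_intros assms Y' Y'')
  then have Z: "(Z \<longlongrightarrow> - L) at_top"
    by (simp add: Y''_def)
  have "((\<lambda>t. Y' t - a * Y t) \<longlongrightarrow> 0 - a * L) at_top"
    by (intro tendsto_intros assms Y')
  then have X: "(X \<longlongrightarrow> - a * L) at_top"
    by (simp add: Y'_def)
  have "(Z' \<longlongrightarrow> 0) at_top"
    by (rule barbalat[OF Z_deriv Z'_deriv \<open>\<And>t. \<bar>Z'' t\<bar> \<le> M3\<close> Z])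
  moreover have "(Z' \<longlongrightarrow> b * (- a * L) + (- L) * (- a * L - c)) at_top"
    unfolding Z'_def[abs_def] by (intro tendsto_intros X Z)
  ultimately have "b * (- a * L) + (- L) * (- a * L - c) = 0"
    by (rule tendsto_unique[OF trivial_limit_at_top_linorder, rotated])
  then have "rossler (a, b, c) (- a * L, L, - L) = 0"
    by (simp add: zero_prod_def)
  moreover have "(\<lambda>t. (X t, Y t, Z t)) = \<phi>"
    by (rule ext) (simp add: \<phi>_eq)
  then have "(\<phi> \<longlongrightarrow> (- a * L, L, - L)) at_top"
    using tendsto_Pair[OF X tendsto_Pair[OF assms Z]] by simp
  ultimately show ?thesis
    by blast
qed

end

theorem lemma2p1:
  fixes P :: "param3 set" and a b c :: real and \<phi> :: "real \<Rightarrow> point3"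
  assumes "open P"
    and "\<forall>p\<in>P. rossler_param_ok p"
    and "(a, b, c) \<in> P"
    and "\<forall>t. (\<phi> has_vector_derivative rossler (a, b, c) (\<phi> t)) (at t)"
    and "bounded (range \<phi>)"
    and "\<not> (\<exists>q. rossler (a, b, c) q = 0 \<and> (\<phi> \<longlongrightarrow> q) at_top)"
    and "\<not> (\<exists>q. rossler (a, b, c) q = 0 \<and> (\<phi> \<longlongrightarrow> q) at_bot)"
  shows "\<exists>t. \<phi> t \<in> H_p (a, b, c) \<and> transverse_to_plane (a, b, c) (\<phi> t)"
proof (rule ccontr)
  assume no_crossing: "\<not> ?thesis"
  have "0 < a"
    using assms(2,3) by auto
  then interpret rossler_orbit a b c \<phi>
    using assms(4,5) by unfold_locales auto
  have "rossler (a, b, c) (\<phi> u) \<noteq> 0" for u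
    using tendsto_equilibrium_if_reached assms(6) by blast
  then obtain L where "(Y \<longlongrightarrow> L) at_top"
    using Y_convergent_if_no_crossing no_crossing by blast
  then show False
    using tendsto_equilibrium_if_Y_converges assms(6) by blast
qed

end
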